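(* For every $x>0$ the limit $\lambda(x)=\lim_{k\to\infty}\frac{a(s^kx)}{(s^kx)^{\log_s p}}$ exists; moreover $\lambda(sx)=\lambda(x)$ and $\lambda(x)\in[m,M]$ for all $x>0$, where $m=\inf_{n\ge1}b_n$, $M=\sup_{n\ge1}b_n$. Furthermore the set $\{\lambda(x):x\in[s^{-1},1)\}$ is dense in $[m,M]$.
   Context: Fix integers $p\ge 3$ and $2\le s<p$, and a set $A\subset\{0,1,\dots,p-1\}$ with $\#A=s$. Let $h:\{0,1,\dots,s-1\}\to A$ be the unique strictly increasing bijection. For a positive integer $n$ with base-$s$ expansion $n=\sum_{i=0}^k\varepsilon_i s^i$ ($\varepsilon_i\in\{0,\dots,s-1\}$, $\varepsilon_k\ne 0$), put $a_n=\sum_{i=0}^k h(\varepsilon_i)p^i$, and put $a_0=h(0)$. Let $b_n=a_n/n^{\log_s p}$ for $n\ge1$. For real $x\ge0$ let $a(x)=a_{\lfloor x\rfloor}$. *)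

theory Defs
  imports "HOL-Analysis.Analysis"
begin

definition digit_map :: "nat set \<Rightarrow> nat \<Rightarrow> nat" where
  "digit_map A i = sorted_list_of_set A ! i"

text \<open>a_n = sum_i h(eps_i) p^i where n = sum_i eps_i s^i in base s; a_0 = h(0).\<close>
fun seq_a :: "nat \<Rightarrow> nat \<Rightarrow> nat set \<Rightarrow> nat \<Rightarrow> nat" where
  "seq_a p s A n =
     (if n < s \<or> s < 2 then digit_map A n
      else digit_map A (n mod s) + p * seq_a p s A (n div s))"

definition seq_b :: "nat \<Rightarrow> nat \<Rightarrow> nat set \<Rightarrow> nat \<Rightarrow> real" where
  "seq_b p s A n = real (seq_a p s A n) / real n powr log s p"

definition a_real :: "nat \<Rightarrow> nat \<Rightarrow> nat set \<Rightarrow> real \<Rightarrow> real" where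
  "a_real p s A x = real (seq_a p s A (nat \<lfloor>x\<rfloor>))"

end

theory Submission
  imports Defs
begin

text \<open>Let \<open>G x = lim\<^sub>k a \<lfloor>s\<^sup>k x\<rfloor> / p\<^sup>k\<close>. Appending a base-\<open>s\<close> digit to \<open>n\<close> turns \<open>a n\<close> into
  \<open>p a n\<close> plus a digit, so the sequence is eventually nondecreasing; it is bounded by \<open>M x\<^sup>\<alpha>\<close>, hence
  \<open>G\<close> exists, is nondecreasing and satisfies \<open>G (s x) = p G x\<close>. Therefore \<open>lam x = G x / x\<^sup>\<alpha>\<close> is
  invariant under \<open>x \<mapsto> s x\<close>, lies in \<open>[m, M]\<close>, and can jump up but never down.
  Moreover \<open>lam n \<ge> b n\<close>, while just left of \<open>n\<close> we have \<open>lam x \<le> a n / x\<^sup>\<alpha> \<approx> b n\<close>. Hence for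
  \<open>t \<in> [m, M]\<close> and \<open>r > 0\<close>, \<open>lam\<close> exceeds \<open>t - r\<close> at some point and, by invariance, is below
  \<open>t + r\<close> at a point further right; having no downward jumps, it cannot skip \<open>(t - r, t + r)\<close>
  in between.\<close>

lemma nat_floor_mult_div:
  assumes "0 < s" and "0 \<le> y"
  shows "nat \<lfloor>real s * y\<rfloor> div s = nat \<lfloor>y\<rfloor>"
proof -
  define n where "n = nat \<lfloor>y\<rfloor>"
  have n: "real n \<le> y" "y < real n + 1" using assms(2) n_def by linarith+
  have "real s * real n \<le> real s * y" using n by (intro mult_left_mono) auto
  moreover have "real s * y < real s * (real n + 1)"
    using n assms(1) by (intro mult_strict_left_mono) auto
  ultimately have "int (s * n) \<le> \<lfloor>real s * y\<rfloor>" "\<lfloor>real s * y\<rfloor> < int (s * n + s)"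
    by (simp_all add: le_floor_iff floor_less_iff distrib_left)
  moreover have "0 \<le> \<lfloor>real s * y\<rfloor>" using assms by simp
  ultimately have "s * n \<le> nat \<lfloor>real s * y\<rfloor>" "nat \<lfloor>real s * y\<rfloor> < s * n + s"
    by (simp_all add: le_nat_iff nat_less_iff)
  then show ?thesis unfolding n_def[symmetric] by (intro div_nat_eqI) auto
qed

lemma scale_invariant_power:
  fixes f :: "real \<Rightarrow> 'a"
  assumes "\<And>x. 0 < x \<Longrightarrow> f (r * x) = f x" and "0 < r" and "0 < x"
  shows "f (r ^ n * x) = f x"
proof (induction n)
  case (Suc n)
  have "f (r ^ Suc n * x) = f (r * (r ^ n * x))" by (simp add: mult.assoc)
  also have "\<dots> = f (r ^ n * x)" using assms by (intro assms(1)) simp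
  finally show ?case using Suc by simp
qed simp

lemma scale_invariant_image_eq:
  fixes f :: "real \<Rightarrow> 'a"
  assumes invariant: "\<And>x. 0 < x \<Longrightarrow> f (r * x) = f x" and "1 < r"
  shows "f ` {0<..} = f ` {1 / r..<1}"
proof
  have "0 < 1 / r" using \<open>1 < r\<close> by simp
  then have "{1 / r..<1} \<subseteq> {0<..}"
    unfolding subset_eq by (metis atLeastLessThan_iff greaterThan_iff less_le_trans)
  then show "f ` {1 / r..<1} \<subseteq> f ` {0<..}" by (rule image_mono)
next
  show "f ` {0<..} \<subseteq> f ` {1 / r..<1}"
  proof
    fix z assume "z \<in> f ` {0<..}"
    then obtain x where x: "0 < x" "z = f x" by auto
    define k where "k = \<lfloor>log r x\<rfloor> + 1"
    define y where "y = x / r powr k"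
    have "r powr (k - 1) \<le> x" "x < r powr k"
      using floor_log_eq_powr_iff[OF x(1) \<open>1 < r\<close>] k_def by auto
    then have "1 / r \<le> y" "y < 1" "0 < y"
      using \<open>1 < r\<close> x(1) by (auto simp: y_def powr_diff field_simps)
    moreover have "f y = f x"
    proof (cases "0 \<le> k")
      case True
      then have "x = r ^ nat k * y"
        using \<open>1 < r\<close> by (simp add: y_def powr_realpow[symmetric])
      then show ?thesis
        using scale_invariant_power[of f r y "nat k", OF invariant] \<open>0 < y\<close> \<open>1 < r\<close> by simp
    next
      case False
      then have "y = r ^ nat (- k) * x"
        using \<open>1 < r\<close> by (simp add: y_def powr_realpow[symmetric] powr_minus divide_inverse)
      then show ?thesis
        using scale_invariant_power[of f r x "nat (- k)", OF invariant] x(1) \<open>1 < r\<close> by simp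
    qed
    ultimately show "z \<in> f ` {1 / r..<1}" using x(2) by (intro image_eqI[of z f y]) auto
  qed
qed

lemma intermediate_value_upward_jumps:
  fixes f :: "real \<Rightarrow> real"
  assumes "a \<le> c" and "u < v" and "u < f a" and "f c < v"
    and right: "\<And>x e. x \<in> {a..c} \<Longrightarrow> 0 < e \<Longrightarrow> eventually (\<lambda>y. f x - e < f y) (at_right x)"
    and left: "\<And>x e. x \<in> {a..c} \<Longrightarrow> 0 < e \<Longrightarrow> eventually (\<lambda>y. f y < f x + e) (at_left x)"
  shows "\<exists>x\<in>{a..c}. u < f x \<and> f x < v"
proof (rule ccontr)
  assume "\<not> ?thesis"
  then have gap: "f x \<le> u \<or> v \<le> f x" if "x \<in> {a..c}" for x
    using that by force
  define S where "S = {x \<in> {a..c}. f x \<le> u}"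
  define T where "T = Inf S"
  have "c \<in> S" using gap[of c] assms(1,4) by (auto simp: S_def)
  then have S_ne: "S \<noteq> {}" and S_bdd: "bdd_below S"
    by (auto simp: S_def bdd_below_def)
  have T_le: "T \<le> y" if "y \<in> S" for y
    unfolding T_def using that S_bdd by (rule cInf_lower)
  have T_in: "T \<in> {a..c}"
    using cInf_greatest[OF S_ne, of a] T_le[OF \<open>c \<in> S\<close>] by (auto simp: S_def T_def)
  have near_T: "\<exists>y\<in>S. y < T + d" if "0 < d" for d
    using cInf_less_iff[OF S_ne S_bdd, of "T + d"] that by (simp add: T_def)
  have fT: "f T \<le> u"
  proof (rule ccontr)
    assume "\<not> f T \<le> u"
    then have "v \<le> f T" using gap T_in by force
    then obtain d where "d > T" and d: "\<And>y. T < y \<Longrightarrow> y < d \<Longrightarrow> u < f y"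
      using right[OF T_in, of "v - u"] \<open>u < v\<close> unfolding eventually_at_right_field by force
    obtain y where "y \<in> S" "y < d" using near_T[of "d - T"] \<open>d > T\<close> by auto
    moreover have "T \<le> y" using T_le \<open>y \<in> S\<close> by blast
    ultimately show False
      using d[of y] \<open>\<not> f T \<le> u\<close> by (cases "y = T") (auto simp: S_def)
  qed
  then have "a < T" using T_in assms(3) by (cases "a = T") auto
  obtain d where "d < T" and d: "\<And>y. d < y \<Longrightarrow> y < T \<Longrightarrow> f y < v"
    using left[OF T_in, of "v - u"] fT \<open>u < v\<close> unfolding eventually_at_left_field by force
  define y where "y = max a ((d + T) / 2)"
  have y: "a \<le> y" "d < y" "y < T"
    using \<open>a < T\<close> \<open>d < T\<close> by (auto simp: y_def less_max_iff_disj max_less_iff_conj)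
  then have "f y < v" using d by blast
  then have "y \<in> S" using gap[of y] y T_in by (auto simp: S_def)
  then show False using T_le y(3) by fastforce
qed

declare seq_a.simps[simp del]

locale digit_sequence =
  fixes p s :: nat and A :: "nat set"
  assumes p_ge_3: "p \<ge> 3" and s_ge_2: "2 \<le> s" and s_less_p: "s < p"
    and A_subset: "A \<subseteq> {0..<p}" and card_A: "card A = s"
begin

abbreviation "h \<equiv> digit_map A"
abbreviation "a \<equiv> seq_a p s A"
abbreviation "b \<equiv> seq_b p s A"
abbreviation "b_inf \<equiv> INF n\<in>{1::nat..}. b n"
abbreviation "b_sup \<equiv> SUP n\<in>{1::nat..}. b n"

lemma digit_in_A: "i < s \<Longrightarrow> h i \<in> A"
  unfolding digit_map_def using A_subset card_A
  by (metis finite_atLeastLessThan finite_subset length_sorted_list_of_set nth_mem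
      set_sorted_list_of_set)

lemma digit_less_p: "i < s \<Longrightarrow> h i < p"
  using digit_in_A[of i] A_subset by (meson atLeastLessThan_iff subsetD)

lemma digit_strict_mono: "i < j \<Longrightarrow> j < s \<Longrightarrow> h i < h j"
  unfolding digit_map_def
  by (metis card_A length_sorted_list_of_set sorted_wrt_nth_less strict_sorted_list_of_set)

lemma seq_a_digit: "n < s \<Longrightarrow> a n = h n"
  by (subst seq_a.simps) simp

lemma seq_a_append_digit:
  assumes "1 \<le> n" and "d < s"
  shows "a (n * s + d) = h d + p * a n"
proof -
  have "s \<le> n * s + d" using assms(1) by (metis le_add1 mult_1 mult_le_mono1 order_trans)
  then show ?thesis using assms(2) s_ge_2 by (subst seq_a.simps) simp
qed

lemma digit_gap_bound: "i < j \<Longrightarrow> j < s \<Longrightarrow> (p - 1) * h i + h (s - 1) \<le> (p - 1) * h j"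
proof -
  assume "i < j" "j < s"
  then have "(p - 1) * (h i + 1) \<le> (p - 1) * h j"
    using digit_strict_mono by (intro mult_le_mono2) (simp add: Suc_le_eq)
  moreover have "h (s - 1) \<le> p - 1" using digit_less_p[of "s - 1"] s_ge_2 by simp
  ultimately show ?thesis by (simp add: distrib_left)
qed

lemma seq_a_carry:
  assumes "1 \<le> m"
  shows "(p - 1) * a (m * s - 1) + h (s - 1) \<le> p * ((p - 1) * a (m - 1) + h (s - 1))"
proof -
  obtain q where p_Suc: "p = Suc q" using p_ge_3 by (metis Suc_le_D numeral_3_eq_3)
  show ?thesis
  proof (cases "m = 1")
    case True
    then show ?thesis using seq_a_digit[of "s - 1"] s_ge_2 p_Suc by (simp add: algebra_simps)
  next
    case False
    then have "1 \<le> m - 1" using assms by simp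
    have "m * s - 1 = (m - 1) * s + (s - 1)" using assms s_ge_2 by (simp add: algebra_simps)
    then show ?thesis
      using seq_a_append_digit[OF \<open>1 \<le> m - 1\<close>, of "s - 1"] s_ge_2 p_Suc
      by (simp add: algebra_simps)
  qed
qed

text \<open>The increment \<open>a n - a (n - 1)\<close> is at least \<open>h (s - 1) / (p - 1)\<close>; in this form the
  bound survives a carry, by \<open>seq_a_carry\<close>.\<close>

lemma seq_a_pred_bound: "1 \<le> n \<Longrightarrow> (p - 1) * a (n - 1) + h (s - 1) \<le> (p - 1) * a n"
proof (induction n rule: less_induct)
  case (less n)
  show ?case
  proof (cases "n < s")
    case True
    then show ?thesis using digit_gap_bound[of "n - 1" n] less.prems seq_a_digit by simp
  next
    case False
    define m where "m = n div s"
    define d where "d = n mod s"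
    have "1 \<le> m" "m < n" using False s_ge_2 by (auto simp: m_def Suc_le_eq div_greater_zero_iff)
    have n_eq: "n = m * s + d" and "d < s" using s_ge_2 by (simp_all add: m_def d_def)
    show ?thesis
    proof (cases "d = 0")
      case True
      have "(p - 1) * a (n - 1) + h (s - 1) \<le> p * ((p - 1) * a (m - 1) + h (s - 1))"
        using seq_a_carry[OF \<open>1 \<le> m\<close>] n_eq True by simp
      also have "\<dots> \<le> p * ((p - 1) * a m)"
        using less.IH[OF \<open>m < n\<close> \<open>1 \<le> m\<close>] by (rule mult_le_mono2)
      also have "\<dots> \<le> (p - 1) * a n"
        using seq_a_append_digit[OF \<open>1 \<le> m\<close>, of 0] n_eq True s_ge_2 by (simp add: algebra_simps)
      finally show ?thesis .
    next
      case False
      have "n - 1 = m * s + (d - 1)" using n_eq False by simp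
      then have "a (n - 1) = h (d - 1) + p * a m"
        using seq_a_append_digit[OF \<open>1 \<le> m\<close>, of "d - 1"] \<open>d < s\<close> by simp
      moreover have "a n = h d + p * a m"
        using seq_a_append_digit[OF \<open>1 \<le> m\<close> \<open>d < s\<close>] n_eq by simp
      ultimately show ?thesis
        using digit_gap_bound[of "d - 1" d] False \<open>d < s\<close> by (simp add: distrib_left)
    qed
  qed
qed

lemma seq_a_le_Suc: "a n \<le> a (Suc n)"
proof -
  have "(p - 1) * a n + h (s - 1) \<le> (p - 1) * a (Suc n)" using seq_a_pred_bound[of "Suc n"] by simp
  then have "(p - 1) * a n \<le> (p - 1) * a (Suc n)" by (rule add_leD1)
  then show ?thesis using p_ge_3 by simp
qed

lemma seq_a_mono: "m \<le> n \<Longrightarrow> a m \<le> a n"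
  using seq_a_le_Suc by (rule lift_Suc_mono_le)

lemma seq_a_mult_pow_pred_bound:
  "1 \<le> n \<Longrightarrow> (p - 1) * a (n * s ^ j - 1) + h (s - 1) \<le> (p - 1) * (p ^ j * a n)"
proof (induction j)
  case 0
  then show ?case using seq_a_pred_bound by simp
next
  case (Suc j)
  have "1 \<le> n * s ^ j" using Suc.prems s_ge_2 by simp
  have "(p - 1) * a (n * s ^ Suc j - 1) + h (s - 1)
      \<le> p * ((p - 1) * a (n * s ^ j - 1) + h (s - 1))"
    using seq_a_carry[OF \<open>1 \<le> n * s ^ j\<close>] by (simp add: ac_simps)
  also have "\<dots> \<le> p * ((p - 1) * (p ^ j * a n))"
    using Suc.IH[OF Suc.prems] by (rule mult_le_mono2)
  finally show ?case by (simp add: ac_simps)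
qed

lemma seq_a_mult_pow_pred_le: "1 \<le> n \<Longrightarrow> a (n * s ^ j - 1) \<le> p ^ j * a n"
proof -
  assume "1 \<le> n"
  then have "(p - 1) * a (n * s ^ j - 1) \<le> (p - 1) * (p ^ j * a n)"
    using seq_a_mult_pow_pred_bound[of n j] by linarith
  then show ?thesis using p_ge_3 by simp
qed

lemma s_gt_1: "1 < real s"
  using s_ge_2 by simp

definition "\<alpha> = log (real s) (real p)"

lemma alpha_pos: "0 < \<alpha>"
  using s_gt_1 s_less_p by (simp add: \<alpha>_def)

lemma power_powr_alpha: "(real s ^ k) powr \<alpha> = real p ^ k"
proof -
  have "(real s ^ k) powr \<alpha> = (real s powr \<alpha>) ^ k"
    using s_gt_1 by (simp add: powr_realpow[symmetric] powr_powr powr_power mult.commute)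
  then show ?thesis using s_gt_1 p_ge_3 by (simp add: \<alpha>_def)
qed

lemma seq_b_eq: "b n = real (a n) / real n powr \<alpha>"
  by (simp add: seq_b_def \<alpha>_def)

lemma seq_a_growth: "1 \<le> n \<Longrightarrow> real (a n) + 1 \<le> real p * real n powr \<alpha>"
proof (induction n rule: less_induct)
  case (less n)
  show ?case
  proof (cases "n < s")
    case True
    have "real (h n) + 1 \<le> real p" using digit_less_p[OF True] by linarith
    also have "\<dots> \<le> real p * real n powr \<alpha>"
      using less.prems alpha_pos ge_one_powr_ge_zero[of "real n" \<alpha>] by (simp add: mult_le_cancel_left1)
    finally show ?thesis using seq_a_digit[OF True] by simp
  next
    case False
    define m where "m = n div s"
    define d where "d = n mod s"
    have "1 \<le> m" "m < n" using False s_ge_2 by (auto simp: m_def Suc_le_eq div_greater_zero_iff)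
    have n_eq: "n = m * s + d" and "d < s" using s_ge_2 by (simp_all add: m_def d_def)
    have "real (a n) + 1 = (real (h d) + 1) + real p * real (a m)"
      using seq_a_append_digit[OF \<open>1 \<le> m\<close> \<open>d < s\<close>] n_eq by simp
    also have "\<dots> \<le> real p + real p * (real p * real m powr \<alpha> - 1)"
      using digit_less_p[OF \<open>d < s\<close>] less.IH[OF \<open>m < n\<close> \<open>1 \<le> m\<close>]
      by (intro add_mono mult_left_mono) linarith+
    also have "\<dots> = real p * ((real m * real s) powr \<alpha>)"
      using power_powr_alpha[of 1] by (simp add: powr_mult algebra_simps)
    also have "\<dots> \<le> real p * real n powr \<alpha>"
      using n_eq alpha_pos by (intro mult_left_mono powr_mono2) auto
    finally show ?thesis .
  qed
qed

lemma bdd_above_seq_b: "bdd_above (b ` {1..})"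
proof (rule bdd_aboveI)
  fix y assume "y \<in> b ` {1..}"
  then obtain n where "1 \<le> n" "y = b n" by auto
  then show "y \<le> real p"
    using seq_a_growth[of n] by (simp add: seq_b_eq divide_le_eq)
qed

lemma bdd_below_seq_b: "bdd_below (b ` {1..})"
  by (rule bdd_belowI[of _ 0]) (auto simp: seq_b_eq)

lemma seq_b_le_b_sup: "1 \<le> n \<Longrightarrow> b n \<le> b_sup"
  using bdd_above_seq_b by (intro cSUP_upper) auto

lemma b_inf_le_seq_b: "1 \<le> n \<Longrightarrow> b_inf \<le> b n"
  using bdd_below_seq_b by (intro cINF_lower) auto

lemma b_inf_nonneg: "0 \<le> b_inf"
  by (intro cINF_greatest) (auto simp: seq_b_eq)

lemma b_sup_nonneg: "0 \<le> b_sup"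
  using seq_b_le_b_sup[of 1] by (simp add: seq_b_eq)

lemma seq_a_le_b_sup: "1 \<le> n \<Longrightarrow> real (a n) \<le> b_sup * real n powr \<alpha>"
  using seq_b_le_b_sup[of n] by (simp add: seq_b_eq divide_le_eq)

lemma b_inf_le_seq_a: "1 \<le> n \<Longrightarrow> b_inf * real n powr \<alpha> \<le> real (a n)"
  using b_inf_le_seq_b[of n] by (simp add: seq_b_eq le_divide_eq)

definition "floor_scaled k x = nat \<lfloor>real s ^ k * x\<rfloor>"
definition "G_seq k x = real (a (floor_scaled k x)) / real p ^ k"
definition "G x = lim (\<lambda>k. G_seq k x)"
definition "lam x = G x / x powr \<alpha>"

lemma floor_scaled_Suc_div: "0 \<le> x \<Longrightarrow> floor_scaled (Suc k) x div s = floor_scaled k x"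
  unfolding floor_scaled_def using nat_floor_mult_div[of s "real s ^ k * x"] s_ge_2
  by (simp add: mult.assoc)

lemma floor_scaled_mono: "x \<le> y \<Longrightarrow> floor_scaled k x \<le> floor_scaled k y"
  unfolding floor_scaled_def by (intro nat_mono floor_mono mult_left_mono) auto

lemma floor_scaled_mono_index: "0 \<le> x \<Longrightarrow> k \<le> j \<Longrightarrow> floor_scaled k x \<le> floor_scaled j x"
  unfolding floor_scaled_def using s_ge_2
  by (intro nat_mono floor_mono mult_right_mono power_increasing) auto

lemma eventually_floor_scaled_pos:
  assumes "0 < x"
  shows "eventually (\<lambda>k. 1 \<le> floor_scaled k x) sequentially"
proof -
  obtain k0 where "1 / x < real s ^ k0" using real_arch_pow s_gt_1 by blast
  then have "1 \<le> real s ^ k0 * x" using assms by (simp add: field_simps)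
  then have "1 \<le> floor_scaled k0 x" unfolding floor_scaled_def by linarith
  then show ?thesis
    unfolding eventually_sequentially using floor_scaled_mono_index assms
    by (meson le_trans less_imp_le)
qed

lemma G_seq_le_Suc:
  assumes "0 \<le> x" and "1 \<le> floor_scaled k x"
  shows "G_seq k x \<le> G_seq (Suc k) x"
proof -
  have "floor_scaled (Suc k) x = floor_scaled k x * s + floor_scaled (Suc k) x mod s"
    using floor_scaled_Suc_div[OF assms(1)] by (metis div_mult_mod_eq)
  moreover have "floor_scaled (Suc k) x mod s < s" using s_ge_2 by simp
  ultimately have "a (floor_scaled (Suc k) x)
      = h (floor_scaled (Suc k) x mod s) + p * a (floor_scaled k x)"
    using seq_a_append_digit[OF assms(2)] by metis
  then have "real p * real (a (floor_scaled k x)) \<le> real (a (floor_scaled (Suc k) x))" by simp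
  then show ?thesis unfolding G_seq_def using p_ge_3 by (simp add: field_simps)
qed

lemma G_seq_mono_index:
  assumes "0 \<le> x" and "1 \<le> floor_scaled k x" and "k \<le> j"
  shows "G_seq k x \<le> G_seq j x"
  using assms(3)
proof (induction j rule: dec_induct)
  case (step i)
  have "1 \<le> floor_scaled i x" using floor_scaled_mono_index[OF assms(1) step(1)] assms(2) by simp
  then show ?case using G_seq_le_Suc[OF assms(1), of i] step(3) by simp
qed simp

lemma G_seq_le_b_sup:
  assumes "0 \<le> x" and "1 \<le> floor_scaled k x"
  shows "G_seq k x \<le> b_sup * x powr \<alpha>"
proof -
  have "real (floor_scaled k x) \<le> real s ^ k * x" unfolding floor_scaled_def using assms(1) by simp
  then have "real (floor_scaled k x) powr \<alpha> \<le> real p ^ k * x powr \<alpha>"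
    using alpha_pos powr_mono2[of \<alpha> "real (floor_scaled k x)" "real s ^ k * x"]
    by (simp add: powr_mult power_powr_alpha)
  then have "real (a (floor_scaled k x)) \<le> b_sup * (real p ^ k * x powr \<alpha>)"
    using seq_a_le_b_sup[OF assms(2)] b_sup_nonneg by (meson mult_left_mono order_trans)
  then show ?thesis unfolding G_seq_def using p_ge_3 by (simp add: field_simps)
qed

lemma G_seq_tendsto: "0 < x \<Longrightarrow> (\<lambda>k. G_seq k x) \<longlonglongrightarrow> G x"
proof -
  assume "0 < x"
  then obtain k0 where k0: "\<And>k. k0 \<le> k \<Longrightarrow> 1 \<le> floor_scaled k x"
    using eventually_floor_scaled_pos unfolding eventually_sequentially by blast
  have "incseq (\<lambda>i. G_seq (i + k0) x)"
    using G_seq_le_Suc k0 \<open>0 < x\<close> by (intro incseq_SucI) (simp add: less_imp_le)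
  moreover have "\<forall>i. G_seq (i + k0) x \<le> b_sup * x powr \<alpha>"
    using G_seq_le_b_sup k0 \<open>0 < x\<close> by (simp add: less_imp_le)
  ultimately obtain L where "(\<lambda>i. G_seq (i + k0) x) \<longlonglongrightarrow> L"
    using incseq_convergent by blast
  then have "(\<lambda>k. G_seq k x) \<longlonglongrightarrow> L" by (rule LIMSEQ_offset)
  then show ?thesis unfolding G_def by (simp add: limI)
qed

lemma G_le_b_sup:
  assumes "0 < x"
  shows "G x \<le> b_sup * x powr \<alpha>"
proof (rule tendsto_upperbound[OF G_seq_tendsto[OF assms]])
  show "eventually (\<lambda>k. G_seq k x \<le> b_sup * x powr \<alpha>) sequentially"
    using eventually_floor_scaled_pos[OF assms]
    by (rule eventually_mono) (use assms G_seq_le_b_sup in auto)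
qed simp

lemma b_inf_le_G: "0 < x \<Longrightarrow> b_inf * x powr \<alpha> \<le> G x"
proof -
  assume "0 < x"
  then obtain k0 where k0: "\<And>k. k0 \<le> k \<Longrightarrow> 1 \<le> floor_scaled k x"
    using eventually_floor_scaled_pos unfolding eventually_sequentially by blast
  have "(\<lambda>k. b_inf * (x - (1 / real s) ^ k) powr \<alpha>) \<longlonglongrightarrow> b_inf * (x - 0) powr \<alpha>"
    using s_ge_2 \<open>0 < x\<close> by (intro tendsto_intros LIMSEQ_realpow_zero) auto
  moreover have "b_inf * (x - (1 / real s) ^ k) powr \<alpha> \<le> G_seq k x" if "k0 \<le> k" for k
  proof -
    have "1 \<le> real (floor_scaled k x)" using k0[OF that] by simp
    moreover have "real (floor_scaled k x) \<le> real s ^ k * x"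
      unfolding floor_scaled_def using \<open>0 < x\<close> by simp
    moreover have "real s ^ k * x - 1 \<le> real (floor_scaled k x)"
      unfolding floor_scaled_def by linarith
    moreover have rescale: "real s ^ k * (x - (1 / real s) ^ k) = real s ^ k * x - 1"
      using s_gt_1 by (simp add: right_diff_distrib power_one_over)
    ultimately have "0 \<le> real s ^ k * (x - (1 / real s) ^ k)" by linarith
    moreover have "0 < real s ^ k" using s_gt_1 by simp
    ultimately have "0 \<le> x - (1 / real s) ^ k" by (auto simp: zero_le_mult_iff)
    then have "real p ^ k * (x - (1 / real s) ^ k) powr \<alpha> = (real s ^ k * x - 1) powr \<alpha>"
      by (simp only: rescale[symmetric] powr_mult power_powr_alpha zero_le_power of_nat_0_le_iff)
    also have "\<dots> \<le> real (floor_scaled k x) powr \<alpha>"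
      using \<open>real s ^ k * x - 1 \<le> real (floor_scaled k x)\<close> \<open>1 \<le> real (floor_scaled k x)\<close>
        \<open>real (floor_scaled k x) \<le> real s ^ k * x\<close> alpha_pos
      by (intro powr_mono2) auto
    finally have "real p ^ k * (x - (1 / real s) ^ k) powr \<alpha> \<le> real (floor_scaled k x) powr \<alpha>" .
    then have "b_inf * (real p ^ k * (x - (1 / real s) ^ k) powr \<alpha>) \<le> real (a (floor_scaled k x))"
      using b_inf_le_seq_a[OF k0[OF that]] b_inf_nonneg by (meson mult_left_mono order_trans)
    then show ?thesis unfolding G_seq_def using p_ge_3 by (simp add: field_simps)
  qed
  ultimately have "b_inf * (x - 0) powr \<alpha> \<le> G x"
    using G_seq_tendsto[OF \<open>0 < x\<close>] by (intro LIMSEQ_le) auto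
  then show ?thesis by simp
qed

lemma G_mono: "0 < x \<Longrightarrow> x \<le> y \<Longrightarrow> G x \<le> G y"
  using G_seq_tendsto[of x] G_seq_tendsto[of y] floor_scaled_mono[of x y] seq_a_mono
  by (intro LIMSEQ_le) (auto simp: G_seq_def divide_right_mono)

lemma G_scale: "0 < x \<Longrightarrow> G (real s * x) = real p * G x"
proof -
  assume "0 < x"
  have "G_seq k (real s * x) = real p * G_seq (Suc k) x" for k
    using p_ge_3 by (simp add: G_seq_def floor_scaled_def mult.assoc mult.left_commute)
  moreover have "(\<lambda>k. real p * G_seq (Suc k) x) \<longlonglongrightarrow> real p * G x"
    using G_seq_tendsto[OF \<open>0 < x\<close>] by (intro tendsto_mult_left LIMSEQ_Suc)
  ultimately have "(\<lambda>k. G_seq k (real s * x)) \<longlonglongrightarrow> real p * G x" by simp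
  moreover have "(\<lambda>k. G_seq k (real s * x)) \<longlonglongrightarrow> G (real s * x)"
    using G_seq_tendsto \<open>0 < x\<close> s_ge_2 by simp
  ultimately show ?thesis using LIMSEQ_unique by blast
qed

lemma seq_a_le_G: "1 \<le> n \<Longrightarrow> real (a n) \<le> G (real n)"
  using G_seq_tendsto[of "real n"] G_seq_mono_index[of "real n" 0]
  by (intro LIMSEQ_le_const) (auto simp: G_seq_def floor_scaled_def)

text \<open>Every \<open>N < n s^k\<close> is at most \<open>n s^k - 1\<close>, whose expansion is that of \<open>n - 1\<close> followed by \<open>k\<close>
  maximal digits.\<close>

lemma G_le_seq_a:
  assumes "1 \<le> n" and "0 < x" and "x < real n"
  shows "G x \<le> real (a n)"
proof -
  have "G_seq k x \<le> real (a n)" for k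
  proof -
    have "real s ^ k * x < real (n * s ^ k)" using assms s_ge_2 by simp
    then have "floor_scaled k x \<le> n * s ^ k - 1"
      unfolding floor_scaled_def by linarith
    then have "a (floor_scaled k x) \<le> p ^ k * a n"
      using seq_a_mono seq_a_mult_pow_pred_le[OF assms(1)] le_trans by blast
    then have "real (a (floor_scaled k x)) \<le> real p ^ k * real (a n)"
      by (metis of_nat_le_iff of_nat_mult of_nat_power)
    then show ?thesis unfolding G_seq_def using p_ge_3 by (simp add: field_simps)
  qed
  then show ?thesis using G_seq_tendsto[OF assms(2)] by (intro LIMSEQ_le_const2) auto
qed

lemma tendsto_lam:
  assumes "0 < x"
  shows "(\<lambda>k. a_real p s A (real s ^ k * x) / (real s ^ k * x) powr \<alpha>) \<longlonglongrightarrow> lam x"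
proof -
  have "a_real p s A (real s ^ k * x) / (real s ^ k * x) powr \<alpha> = G_seq k x / x powr \<alpha>" for k
    using assms by (simp add: a_real_def G_seq_def floor_scaled_def powr_mult power_powr_alpha)
  moreover have "(\<lambda>k. G_seq k x / x powr \<alpha>) \<longlonglongrightarrow> lam x"
    unfolding lam_def using assms by (intro tendsto_divide tendsto_const G_seq_tendsto) auto
  ultimately show ?thesis by simp
qed

lemma lam_scale: "0 < x \<Longrightarrow> lam (real s * x) = lam x"
  unfolding lam_def using G_scale[of x] power_powr_alpha[of 1] p_ge_3 s_ge_2
  by (simp add: powr_mult)

lemma lam_in_bounds: "0 < x \<Longrightarrow> lam x \<in> {b_inf..b_sup}"
  unfolding lam_def using G_le_b_sup[of x] b_inf_le_G[of x]
  by (simp add: divide_le_eq le_divide_eq)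

lemma seq_b_le_lam: "1 \<le> n \<Longrightarrow> b n \<le> lam (real n)"
  unfolding seq_b_eq lam_def using seq_a_le_G[of n] by (simp add: divide_right_mono)

text \<open>Since \<open>G\<close> is monotone, \<open>lam\<close> can only jump upwards.\<close>

lemma lam_right_lower_semicontinuous:
  assumes "0 < x" and "0 < e"
  shows "eventually (\<lambda>y. lam x - e < lam y) (at_right x)"
proof -
  have "((\<lambda>y. G x / y powr \<alpha>) \<longlongrightarrow> lam x) (at_right x)"
    unfolding lam_def using assms(1) by (intro tendsto_intros) auto
  then have "eventually (\<lambda>y. lam x - e < G x / y powr \<alpha>) (at_right x)"
    using assms(2) by (intro order_tendstoD) auto
  then show ?thesis using eventually_at_right_less[of x]
  proof eventually_elim
    case (elim y)
    have "G x / y powr \<alpha> \<le> G y / y powr \<alpha>"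
      using G_mono[OF assms(1)] elim(2) by (intro divide_right_mono) auto
    then show ?case using elim(1) unfolding lam_def by linarith
  qed
qed

lemma lam_left_upper_semicontinuous:
  assumes "0 < x" and "0 < e"
  shows "eventually (\<lambda>y. lam y < lam x + e) (at_left x)"
proof -
  have "((\<lambda>y. G x / y powr \<alpha>) \<longlongrightarrow> lam x) (at_left x)"
    unfolding lam_def using assms(1) by (intro tendsto_intros) auto
  then have "eventually (\<lambda>y. G x / y powr \<alpha> < lam x + e) (at_left x)"
    using assms(2) by (intro order_tendstoD) auto
  then show ?thesis using eventually_at_left_real[OF assms(1)]
  proof eventually_elim
    case (elim y)
    have "G y / y powr \<alpha> \<le> G x / y powr \<alpha>"
      using G_mono[of y x] elim(2) by (intro divide_right_mono) auto
    then show ?case using elim(1) unfolding lam_def by linarith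
  qed
qed

lemma lam_approximates:
  assumes "b_inf \<le> t" and "t \<le> b_sup" and "0 < r"
  shows "\<exists>x>0. \<bar>lam x - t\<bar> < r"
proof -
  obtain n1 where "1 \<le> n1" "t - r < b n1"
    using less_cSUP_iff[OF _ bdd_above_seq_b, of "t - r"] assms by auto
  then have high: "t - r < lam (real n1)"
    using seq_b_le_lam by fastforce
  obtain n2 where "1 \<le> n2" "b n2 < t + r"
    using cINF_less_iff[OF _ bdd_below_seq_b, of "t + r"] assms by auto
  have "((\<lambda>x. real (a n2) / x powr \<alpha>) \<longlongrightarrow> b n2) (at_left (real n2))"
    using \<open>1 \<le> n2\<close> unfolding seq_b_eq by (intro tendsto_intros) auto
  then have "eventually (\<lambda>x. real (a n2) / x powr \<alpha> < t + r) (at_left (real n2))"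
    using \<open>b n2 < t + r\<close> by (rule order_tendstoD)
  moreover have "eventually (\<lambda>x. x \<in> {0<..<real n2}) (at_left (real n2))"
    using \<open>1 \<le> n2\<close> by (intro eventually_at_left_real) simp
  ultimately have "eventually (\<lambda>x. 0 < x \<and> lam x < t + r) (at_left (real n2))"
  proof eventually_elim
    case (elim x)
    have "G x / x powr \<alpha> \<le> real (a n2) / x powr \<alpha>"
      using G_le_seq_a[OF \<open>1 \<le> n2\<close>, of x] elim(2) by (intro divide_right_mono) auto
    then show ?case using elim unfolding lam_def by auto
  qed
  then obtain x2 where "0 < x2" "lam x2 < t + r"
    using eventually_happens by force
  obtain k where "real n1 / x2 < real s ^ k" using real_arch_pow s_gt_1 by blast
  define x3 where "x3 = real s ^ k * x2"
  have "real n1 \<le> x3" using \<open>real n1 / x2 < real s ^ k\<close> \<open>0 < x2\<close>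
    by (simp add: x3_def field_simps)
  have "lam x3 < t + r"
    using scale_invariant_power[of lam "real s" x2 k, OF lam_scale] \<open>0 < x2\<close> \<open>lam x2 < t + r\<close> s_gt_1
    by (simp add: x3_def)
  have pos: "0 < y" if "y \<in> {real n1..x3}" for y using that \<open>1 \<le> n1\<close> by auto
  have "\<exists>x\<in>{real n1..x3}. t - r < lam x \<and> lam x < t + r"
    by (rule intermediate_value_upward_jumps[OF \<open>real n1 \<le> x3\<close> _ high \<open>lam x3 < t + r\<close>
          lam_right_lower_semicontinuous[OF pos] lam_left_upper_semicontinuous[OF pos]])
      (use \<open>0 < r\<close> in simp)
  then obtain x where "x \<in> {real n1..x3}" "t - r < lam x" "lam x < t + r" by blast
  then show ?thesis using pos[of x] by (intro exI[of _ x]) (auto simp: abs_less_iff)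
qed

lemma bounds_subset_closure_lam: "{b_inf..b_sup} \<subseteq> closure (lam ` {1 / real s..<1})"
proof
  fix t assume t: "t \<in> {b_inf..b_sup}"
  have "lam ` {1 / real s..<1} = lam ` {0<..}"
    using scale_invariant_image_eq[of lam "real s", OF lam_scale] s_gt_1 by simp
  moreover have "\<exists>y\<in>lam ` {0<..}. dist y t < r" if "0 < r" for r
    using lam_approximates[of t r] t that by (auto simp: dist_real_def)
  ultimately show "t \<in> closure (lam ` {1 / real s..<1})"
    unfolding closure_approachable by simp
qed

end

theorem mainTheorem9:
  fixes p s :: nat and A :: "nat set"
  assumes "p \<ge> 3" and "2 \<le> s" and "s < p"
    and "A \<subseteq> {0..<p}" and "card A = s"
  defines "m \<equiv> (INF n\<in>{1::nat..}. seq_b p s A n)"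
      and "M \<equiv> (SUP n\<in>{1::nat..}. seq_b p s A n)"
  shows "\<exists>lam :: real \<Rightarrow> real.
           (\<forall>x>0. (\<lambda>k. a_real p s A (real s ^ k * x) / (real s ^ k * x) powr log s p)
                    \<longlonglongrightarrow> lam x)
         \<and> (\<forall>x>0. lam (real s * x) = lam x)
         \<and> (\<forall>x>0. lam x \<in> {m..M})
         \<and> {m..M} \<subseteq> closure (lam ` {1 / real s..<1})"
proof -
  interpret digit_sequence p s A using assms by unfold_locales
  show ?thesis
    unfolding m_def M_def
    using tendsto_lam[unfolded \<alpha>_def] lam_scale lam_in_bounds bounds_subset_closure_lam
    by (intro exI[of _ lam]) auto
qed

end
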